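(* Fix $\alpha>1$, a target model $\theta_0^*\in\Theta$ and a class $\hat\Theta_0^{\mathrm{u}}\subseteq\Theta$, let $\epsilon_0=\min_{\theta_0\in\hat\Theta_0^{\mathrm{u}}}\max_{\pi\in\Pi}\mathtt{D}_{\mathtt{R},\alpha}(\mathbb{P}^\pi_{\theta_0^*},\mathbb{P}^\pi_{\theta_0})$ and let $\theta_0^{\epsilon_0}\in\hat\Theta_0^{\mathrm{u}}$ attain this minimum. Consider trajectories $\tau_H^{t,h}\sim\mathbb{P}^{\nu_h^{\pi^t}}_{\theta_0^*}$ collected by OMLE, where each $\pi^t$ is chosen based on data from earlier iterations. Then with probability at least $1-\delta$, for every $k\in[K]$, \[\sum_{t<k}\sum_{h}\log\frac{\mathbb{P}^{\nu_h^{\pi^t}}_{\theta_0^*}(\tau_H^{t,h})}{\mathbb{P}^{\nu_h^{\pi^t}}_{\theta_0^{\epsilon_0}}(\tau_H^{t,h})}\le\epsilon_0KH+\frac{\mathbf{1}_{\{\epsilon_0\ne0\}}}{\alpha-1}\log\frac{K}{\delta}.\]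
   Context: Setting: finite $\mathcal{O},\mathcal{A}$, horizon $H$; trajectories $\tau_H=(o_1,a_1,\ldots,o_H,a_H)$; policies $\pi$ with $a_h\sim\pi_h(\cdot\mid\tau_{h-1},o_h)$, $\Pi$ the set of all policies; $\mathbb{P}^\pi_\theta$ is the trajectory law of model $\theta$ under $\pi$. $\Theta$ is the set of rank-$r$, $\gamma$-well-conditioned predictive state representations (PSRs); the target task has core action sequence sets $\mathcal{Q}_h^A\subset\mathcal{A}^{H-h}$. Rényi divergence of order $\alpha>1$: $\mathtt{D}_{\mathtt{R},\alpha}(\mathbb{P},\mathbb{Q})=\frac{1}{\alpha-1}\log\mathbb{E}_{\mathbb{P}}[(\mathrm{d}\mathbb{P}/\mathrm{d}\mathbb{Q})^{\alpha-1}]$. $\mathtt{D}_{\mathtt{TV}}(\mathbb{P},\mathbb{Q})=\sum_x|\mathbb{P}(x)-\mathbb{Q}(x)|$. OMLE data collection: at iteration $t\in[K]$, $\pi^t\in\arg\max_{\pi\in\Pi}\max_{\theta,\theta'\in\boldsymbol{\mathcal{B}}_t}\mathtt{D}_{\mathtt{TV}}(\mathbb{P}^\pi_\theta,\mathbb{P}^\pi_{\theta'})$ for a data-dependent confidence set $\boldsymbol{\mathcal{B}}_t\subseteq\hat\Theta_0^{\mathrm{u}}$, and for each $h\in[H]$ one trajectory $\tau_H^{t,h}$ is drawn from the target task using $\nu_h^{\pi^t}$, which follows $\pi^t$ for the first $h-1$ steps, takes a uniformly random action at step $h$, then plays a uniformly random core action sequence from $\mathcal{Q}_h^A$. *)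

theory Defs
  imports "HOL-Probability.Probability"
begin

type_synonym ('o,'a) traj = "('o \<times> 'a) list"

(* A (general sequential) model: law of the next observation o_{h+1} given tau_h.
   Every PSR theta induces such a kernel; P^pi_theta depends on theta only through it. *)
type_synonym ('o,'a) model = "('o,'a) traj \<Rightarrow> 'o pmf"

(* A policy: pi_h(. | tau_{h-1}, o_h); the step h is length tau_{h-1} + 1. *)
type_synonym ('o,'a) policy = "('o,'a) traj \<Rightarrow> 'o \<Rightarrow> 'a pmf"

primrec traj_pmf :: "('o,'a) model \<Rightarrow> ('o,'a) policy \<Rightarrow> nat \<Rightarrow> ('o,'a) traj pmf" where
  "traj_pmf \<theta> \<pi> 0 = return_pmf []"
| "traj_pmf \<theta> \<pi> (Suc n) =
     bind_pmf (traj_pmf \<theta> \<pi> n) (\<lambda>\<tau>. bind_pmf (\<theta> \<tau>) (\<lambda>ob.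
       bind_pmf (\<pi> \<tau> ob) (\<lambda>a. return_pmf (\<tau> @ [(ob, a)]))))"

definition renyi_div :: "real \<Rightarrow> 'x pmf \<Rightarrow> 'x pmf \<Rightarrow> ereal" where
  "renyi_div \<alpha> P Q =
     (if \<forall>x. pmf Q x = 0 \<longrightarrow> pmf P x = 0
      then ereal (1 / (\<alpha> - 1) *
             ln (\<Sum>x\<in>set_pmf P. pmf P x * (pmf P x / pmf Q x) powr (\<alpha> - 1)))
      else \<infinity>)"

(* nu_h^pi: follow pi for steps 1..h-1, uniform action at step h, then a uniformly random
   core action sequence q from Qs h (a set of lists of length H-h) for steps h+1..H.
   Written as a genuine (history-dependent) policy: at step h+j (j >= 1) the action is
   the j-th entry of q, where q is uniform over the core sequences consistent with the
   actions a_{h+1},...,a_{h+j-1} already played (this is exactly "draw q uniformly, play it"). *)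
definition nu_policy :: "(nat \<Rightarrow> 'a::finite list set) \<Rightarrow> nat \<Rightarrow> ('o,'a) policy \<Rightarrow> ('o,'a) policy" where
  "nu_policy Qs h \<pi> \<tau> ob =
     (let m = length \<tau> in
      if Suc m < h then \<pi> \<tau> ob
      else if Suc m = h then pmf_of_set UNIV
      else (let j = Suc m - h;
                S = {q \<in> Qs h. take (j - 1) q = map snd (drop h \<tau>)}
            in if S = {} then pmf_of_set UNIV
               else map_pmf (\<lambda>q. q ! (j - 1)) (pmf_of_set S)))"

primrec seq_pmf :: "'x pmf list \<Rightarrow> 'x list pmf" where
  "seq_pmf [] = return_pmf []"
| "seq_pmf (p # ps) = bind_pmf p (\<lambda>x. bind_pmf (seq_pmf ps) (\<lambda>xs. return_pmf (x # xs)))"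

(* The data D is a list whose (t-1)-th entry is the list
   [tau^{t,1}, ..., tau^{t,H}].  The policy pi^t = sel (data of iterations 1..t-1) is chosen
   adaptively from earlier data (OMLE's choice is one particular such rule sel); then
   tau^{t,h} ~ P^{nu_h^{pi^t}}_{theta*} independently for h = 1..H. *)
primrec collect :: "(('o,'a) traj list list \<Rightarrow> ('o,'a) policy) \<Rightarrow> ('o,'a) model
    \<Rightarrow> (nat \<Rightarrow> 'a::finite list set) \<Rightarrow> nat \<Rightarrow> nat \<Rightarrow> ('o,'a) traj list list pmf" where
  "collect sel \<theta> Qs H 0 = return_pmf []"
| "collect sel \<theta> Qs H (Suc t) =
     bind_pmf (collect sel \<theta> Qs H t) (\<lambda>D.
       bind_pmf (seq_pmf (map (\<lambda>h. traj_pmf \<theta> (nu_policy Qs h (sel D)) H) [1..<Suc H]))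
         (\<lambda>taus. return_pmf (D @ [taus])))"

end

theory Submission
  imports Defs
begin

text \<open>With \<open>\<beta> = \<alpha> - 1\<close>, the bound \<open>D\<^sub>\<alpha>(P, Q) \<le> \<epsilon>\<close> says exactly that the likelihood ratio has
  moment \<open>E\<^sub>P[(P/Q)\<^sup>\<beta>] \<le> exp (\<beta> \<epsilon>)\<close>. Each iteration's policy is a function of the earlier data
  and its \<open>H\<close> trajectories are drawn independently given that data, so conditioning on the past
  multiplies these moments: the exponentiated log-likelihood ratio accumulated over \<open>k\<close> iterations
  has mean at most \<open>exp (\<beta> \<epsilon> k H)\<close>. A Chernoff bound for each \<open>k < K\<close> and a union bound over
  them give the claim. If \<open>\<epsilon> = 0\<close>, the moment equals 1, which forces \<open>P = Q\<close> on the support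
  of \<open>P\<close>, so every observed log-ratio vanishes.\<close>

lemma one_add_less_powr_add_divide:
  fixes \<beta> r :: real
  assumes "0 < \<beta>" "0 < r" "r \<noteq> 1"
  shows "1 + \<beta> < r powr \<beta> + \<beta> / r"
proof -
  define u where "u = ln r"
  have "u \<noteq> 0" using assms by (simp add: u_def)
  have "r powr \<beta> = exp (\<beta> * u)" using assms by (simp add: powr_def u_def mult.commute)
  moreover have "1 + \<beta> * u \<le> exp (\<beta> * u)" by simp
  moreover have "\<beta> / r = \<beta> * exp (- u)" using assms by (simp add: u_def exp_minus field_simps)
  moreover have "1 - u < exp (- u)" using exp_minus_greater \<open>u \<noteq> 0\<close> by blast
  ultimately have "1 + \<beta> * u + \<beta> * (1 - u) < r powr \<beta> + \<beta> / r"
    using assms(1) by (smt (verit) mult_strict_left_mono)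
  then show ?thesis by (simp add: algebra_simps)
qed

lemma one_add_le_powr_add_divide:
  fixes \<beta> r :: real
  assumes "0 < \<beta>" "0 < r"
  shows "1 + \<beta> \<le> r powr \<beta> + \<beta> / r"
  using one_add_less_powr_add_divide[OF assms] assms by (cases "r = 1") auto

definition renyi_moment :: "real \<Rightarrow> 'x pmf \<Rightarrow> 'x pmf \<Rightarrow> real" where
  "renyi_moment \<beta> P Q = (\<Sum>x\<in>set_pmf P. pmf P x * (pmf P x / pmf Q x) powr \<beta>)"

lemma renyi_div_eq_ereal:
  "set_pmf P \<subseteq> set_pmf Q \<Longrightarrow> renyi_div \<alpha> P Q = ereal (ln (renyi_moment (\<alpha> - 1) P Q) / (\<alpha> - 1))"
  by (auto simp: renyi_div_def renyi_moment_def set_pmf_iff)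

lemma set_pmf_subset_if_renyi_div_le:
  "renyi_div \<alpha> P Q \<le> ereal e \<Longrightarrow> set_pmf P \<subseteq> set_pmf Q"
  by (auto simp: renyi_div_def set_pmf_iff split: if_splits)

text \<open>Each summand is nonnegative and vanishes only where \<open>pmf P x = pmf Q x\<close>; this gives both
  \<open>1 \<le> renyi_moment\<close> and its equality case.\<close>

lemma renyi_moment_minus_one_ge:
  fixes P Q :: "'x pmf"
  assumes "0 < \<beta>" and fin: "finite (set_pmf P)" and sub: "set_pmf P \<subseteq> set_pmf Q"
  shows "(\<Sum>x\<in>set_pmf P. pmf P x * ((pmf P x / pmf Q x) powr \<beta> + \<beta> / (pmf P x / pmf Q x) - (1 + \<beta>)))
          \<le> renyi_moment \<beta> P Q - 1"
proof -
  have "(\<Sum>x\<in>set_pmf P. pmf P x) = 1" using fin by (simp add: sum_pmf_eq_1)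
  moreover have "(\<Sum>x\<in>set_pmf P. pmf Q x) \<le> 1"
    using measure_measure_pmf_finite[OF fin, of Q] measure_pmf.prob_le_1 by metis
  moreover have "pmf P x * ((pmf P x / pmf Q x) powr \<beta> + \<beta> / (pmf P x / pmf Q x) - (1 + \<beta>))
      = pmf P x * (pmf P x / pmf Q x) powr \<beta> + \<beta> * pmf Q x - (1 + \<beta>) * pmf P x"
    if "x \<in> set_pmf P" for x
    using that sub pmf_positive[of x P] pmf_positive[of x Q] by (auto simp: field_simps)
  ultimately show ?thesis
    using \<open>0 < \<beta>\<close>
    by (simp add: renyi_moment_def sum.distrib sum_subtractf flip: sum_distrib_left)
qed

lemma renyi_moment_gap_nonneg:
  fixes P Q :: "'x pmf"
  assumes "0 < \<beta>" "set_pmf P \<subseteq> set_pmf Q" "x \<in> set_pmf P"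
  shows "0 \<le> pmf P x * ((pmf P x / pmf Q x) powr \<beta> + \<beta> / (pmf P x / pmf Q x) - (1 + \<beta>))"
  using assms one_add_le_powr_add_divide[OF \<open>0 < \<beta>\<close>, of "pmf P x / pmf Q x"]
    pmf_positive[of x P] pmf_positive[of x Q] by auto

lemma one_le_renyi_moment:
  fixes P Q :: "'x pmf"
  assumes "0 < \<beta>" "finite (set_pmf P)" "set_pmf P \<subseteq> set_pmf Q"
  shows "1 \<le> renyi_moment \<beta> P Q"
proof -
  have "0 \<le> (\<Sum>x\<in>set_pmf P. pmf P x * ((pmf P x / pmf Q x) powr \<beta> + \<beta> / (pmf P x / pmf Q x) - (1 + \<beta>)))"
    by (rule sum_nonneg) (rule renyi_moment_gap_nonneg[OF assms(1,3)])
  with renyi_moment_minus_one_ge[OF assms] show ?thesis by linarith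
qed

lemma pmf_eq_if_renyi_moment_le_one:
  fixes P Q :: "'x pmf"
  assumes "0 < \<beta>" and fin: "finite (set_pmf P)" and sub: "set_pmf P \<subseteq> set_pmf Q"
    and le: "renyi_moment \<beta> P Q \<le> 1" and x: "x \<in> set_pmf P"
  shows "pmf P x = pmf Q x"
proof -
  define gap where "gap x = pmf P x * ((pmf P x / pmf Q x) powr \<beta> + \<beta> / (pmf P x / pmf Q x) - (1 + \<beta>))" for x
  have nonneg: "y \<in> set_pmf P \<Longrightarrow> 0 \<le> gap y" for y
    unfolding gap_def by (rule renyi_moment_gap_nonneg[OF \<open>0 < \<beta>\<close> sub])
  have "sum gap (set_pmf P) \<le> 0"
    using renyi_moment_minus_one_ge[OF \<open>0 < \<beta>\<close> fin sub] le by (simp add: gap_def)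
  moreover have "0 \<le> sum gap (set_pmf P)" using nonneg by (rule sum_nonneg)
  ultimately have "sum gap (set_pmf P) = 0" by linarith
  then have "gap x = 0" using sum_nonneg_eq_0_iff[OF fin, of gap] nonneg x by blast
  moreover have "0 < pmf P x" "0 < pmf Q x" using x sub by (auto intro: pmf_positive)
  ultimately have "\<not> 1 + \<beta> < (pmf P x / pmf Q x) powr \<beta> + \<beta> / (pmf P x / pmf Q x)"
    by (simp add: gap_def)
  then have "pmf P x / pmf Q x = 1"
    using one_add_less_powr_add_divide[OF \<open>0 < \<beta>\<close>, of "pmf P x / pmf Q x"]
      \<open>0 < pmf P x\<close> \<open>0 < pmf Q x\<close> by fastforce
  then show ?thesis by simp
qed

lemma renyi_div_nonneg:
  assumes "1 < \<alpha>"
  shows "0 \<le> renyi_div \<alpha> P Q"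
proof (cases "set_pmf P \<subseteq> set_pmf Q")
  case True
  have "0 \<le> ln (renyi_moment (\<alpha> - 1) P Q)"
  proof (cases "finite (set_pmf P)")
    case True
    have "1 \<le> renyi_moment (\<alpha> - 1) P Q"
      using \<open>1 < \<alpha>\<close> True \<open>set_pmf P \<subseteq> set_pmf Q\<close> by (intro one_le_renyi_moment) auto
    then show ?thesis by simp
  qed (simp add: renyi_moment_def)
  then show ?thesis using True \<open>1 < \<alpha>\<close> by (simp add: renyi_div_eq_ereal)
next
  case False
  then show ?thesis by (auto simp: renyi_div_def set_pmf_iff)
qed

lemma renyi_moment_le_exp_if_renyi_div_le:
  assumes "1 < \<alpha>" "finite (set_pmf P)" and le: "renyi_div \<alpha> P Q \<le> ereal e"
  shows "renyi_moment (\<alpha> - 1) P Q \<le> exp ((\<alpha> - 1) * e)"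
proof -
  have sub: "set_pmf P \<subseteq> set_pmf Q" by (rule set_pmf_subset_if_renyi_div_le[OF le])
  have "ln (renyi_moment (\<alpha> - 1) P Q) \<le> (\<alpha> - 1) * e"
    using le \<open>1 < \<alpha>\<close> by (simp add: renyi_div_eq_ereal[OF sub] field_simps)
  moreover have "0 < renyi_moment (\<alpha> - 1) P Q"
    using one_le_renyi_moment[of "\<alpha> - 1", OF _ assms(2) sub] \<open>1 < \<alpha>\<close> by simp
  ultimately show ?thesis by (metis exp_le_cancel_iff exp_ln)
qed

lemma nn_integral_exp_ln_ratio_eq_renyi_moment:
  fixes P Q :: "'x pmf"
  assumes fin: "finite (set_pmf P)" and sub: "set_pmf P \<subseteq> set_pmf Q"
  shows "(\<integral>\<^sup>+x. ennreal (exp (\<beta> * ln (pmf P x / pmf Q x))) \<partial>P) = ennreal (renyi_moment \<beta> P Q)"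
proof -
  have "(\<integral>\<^sup>+x. ennreal (exp (\<beta> * ln (pmf P x / pmf Q x))) \<partial>P)
      = (\<Sum>x\<in>set_pmf P. ennreal (exp (\<beta> * ln (pmf P x / pmf Q x))) * pmf P x)"
    by (rule nn_integral_measure_pmf_finite[OF fin]) auto
  also have "\<dots> = (\<Sum>x\<in>set_pmf P. ennreal (pmf P x * (pmf P x / pmf Q x) powr \<beta>))"
  proof (intro sum.cong refl)
    fix x assume "x \<in> set_pmf P"
    then have "0 < pmf P x" "0 < pmf Q x" using sub by (auto intro: pmf_positive)
    then show "ennreal (exp (\<beta> * ln (pmf P x / pmf Q x))) * pmf P x
        = ennreal (pmf P x * (pmf P x / pmf Q x) powr \<beta>)"
      by (simp add: powr_def ennreal_mult' mult.commute)
  qed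
  also have "\<dots> = ennreal (renyi_moment \<beta> P Q)"
    unfolding renyi_moment_def by (rule sum_ennreal) auto
  finally show ?thesis .
qed

lemma measure_pmf_ge_le_exp_moment:
  fixes f :: "'x \<Rightarrow> real" and M :: "'x pmf"
  assumes "0 < s" "0 \<le> B" and moment: "(\<integral>\<^sup>+x. ennreal (exp (s * f x)) \<partial>M) \<le> ennreal B"
  shows "measure_pmf.prob M {x. a \<le> f x} \<le> exp (- s * a) * B"
proof -
  have "emeasure M {x \<in> space M. a \<le> f x}
      \<le> ennreal (exp (- s * a)) * (\<integral>\<^sup>+x. ennreal (exp (s * f x)) * indicator (space M) x \<partial>M)"
    using \<open>0 < s\<close> by (intro Chernoff_ineq_nn_integral_ge) auto
  also have "\<dots> \<le> ennreal (exp (- s * a)) * ennreal B"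
    using moment by (intro mult_left_mono) auto
  finally show ?thesis
    using \<open>0 \<le> B\<close> by (simp add: measure_pmf.emeasure_eq_measure ennreal_mult' [symmetric])
qed

lemma finite_set_pmf_traj_pmf:
  "finite (set_pmf (traj_pmf (\<theta> :: ('o::finite, 'a::finite) model) \<pi> n))"
proof -
  have "set_pmf (traj_pmf \<theta> \<pi> n) \<subseteq> {xs. set xs \<subseteq> UNIV \<and> length xs = n}"
    by (induction n) auto
  then show ?thesis by (rule finite_subset) (rule finite_lists_length_eq, simp)
qed

lemma set_pmf_seq_pmf:
  "xs \<in> set_pmf (seq_pmf ps) \<Longrightarrow> length xs = length ps \<and> (\<forall>i<length ps. xs ! i \<in> set_pmf (ps ! i))"
proof (induction ps arbitrary: xs)
  case (Cons p ps)
  then obtain x ys where "x \<in> set_pmf p" "ys \<in> set_pmf (seq_pmf ps)" "xs = x # ys" by auto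
  with Cons.IH[of ys] show ?case by (auto simp: nth_Cons split: nat.splits)
qed simp

lemma nn_integral_seq_pmf_prod_le:
  fixes f :: "nat \<Rightarrow> 'x \<Rightarrow> ennreal" and ps :: "'x pmf list"
  assumes "\<And>i. i < length ps \<Longrightarrow> (\<integral>\<^sup>+x. f i x \<partial>(ps ! i)) \<le> B"
  shows "(\<integral>\<^sup>+xs. (\<Prod>i<length ps. f i (xs ! i)) \<partial>seq_pmf ps) \<le> B ^ length ps"
  using assms
proof (induction ps arbitrary: f)
  case (Cons p ps)
  have IH: "(\<integral>\<^sup>+xs. (\<Prod>i<length ps. f (Suc i) (xs ! i)) \<partial>seq_pmf ps) \<le> B ^ length ps"
    by (rule Cons.IH) (use Cons.prems in fastforce)
  have "(\<integral>\<^sup>+xs. (\<Prod>i<length (p # ps). f i (xs ! i)) \<partial>seq_pmf (p # ps))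
      = (\<integral>\<^sup>+x. f 0 x * \<integral>\<^sup>+xs. (\<Prod>i<length ps. f (Suc i) (xs ! i)) \<partial>seq_pmf ps \<partial>p)"
    by (simp add: prod.lessThan_Suc_shift nn_integral_cmult del: prod.lessThan_Suc)
  also have "\<dots> \<le> (\<integral>\<^sup>+x. f 0 x * B ^ length ps \<partial>p)"
    by (rule nn_integral_mono) (use IH in \<open>simp add: mult_left_mono\<close>)
  also have "\<dots> = (\<integral>\<^sup>+x. f 0 x \<partial>p) * B ^ length ps"
    by (simp add: nn_integral_multc)
  also have "\<dots> \<le> B * B ^ length ps"
    using Cons.prems[of 0] by (simp add: mult_right_mono)
  finally show ?case by simp
qed simp

lemma length_of_set_pmf_collect:
  "D \<in> set_pmf (collect sel \<theta> Qs H n) \<Longrightarrow> length D = n"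
  by (induction n arbitrary: D) auto

lemma set_pmf_collect_nth:
  assumes "D \<in> set_pmf (collect sel \<theta> Qs H n)" "t < n" "i < H"
  shows "D ! t ! i \<in> set_pmf (traj_pmf \<theta> (nu_policy Qs (Suc i) (sel (take t D))) H)"
  using assms
proof (induction n arbitrary: D)
  case (Suc n)
  then obtain D0 taus where D0: "D0 \<in> set_pmf (collect sel \<theta> Qs H n)"
    and taus: "taus \<in> set_pmf (seq_pmf (map (\<lambda>h. traj_pmf \<theta> (nu_policy Qs h (sel D0)) H) [1..<Suc H]))"
    and D: "D = D0 @ [taus]" by auto
  have "taus ! i \<in> set_pmf (traj_pmf \<theta> (nu_policy Qs (Suc i) (sel D0)) H)"
    using set_pmf_seq_pmf[OF taus] \<open>i < H\<close> by (auto simp del: upt_Suc simp: nth_upt)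
  with Suc D length_of_set_pmf_collect[OF D0] show ?case
    by (cases "t < n") (auto simp: nth_append less_Suc_eq)
qed simp

lemma map_pmf_take_collect:
  "m \<le> n \<Longrightarrow> map_pmf (take m) (collect sel \<theta> Qs H n) = collect sel \<theta> Qs H m"
proof (induction n)
  case (Suc n)
  show ?case
  proof (cases "m = Suc n")
    case True
    then have "map_pmf (take m) (collect sel \<theta> Qs H (Suc n)) = map_pmf id (collect sel \<theta> Qs H (Suc n))"
      by (intro map_pmf_cong) (auto dest: length_of_set_pmf_collect)
    then show ?thesis using True by (simp add: pmf.map_id)
  next
    case False
    then have "m \<le> n" using Suc.prems by simp
    have "map_pmf (take m) (collect sel \<theta> Qs H (Suc n))
        = bind_pmf (collect sel \<theta> Qs H n) (\<lambda>D. return_pmf (take m D))"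
      unfolding collect.simps map_bind_pmf
      using \<open>m \<le> n\<close> by (intro bind_pmf_cong) (auto dest: length_of_set_pmf_collect simp: map_return_pmf)
    then show ?thesis using Suc.IH[OF \<open>m \<le> n\<close>] by (simp add: map_pmf_def)
  qed
qed simp

definition iteration_sum :: "(('o,'a) policy \<Rightarrow> ('o,'a) traj \<Rightarrow> real)
    \<Rightarrow> (('o,'a) traj list list \<Rightarrow> ('o,'a) policy) \<Rightarrow> (nat \<Rightarrow> 'a::finite list set)
    \<Rightarrow> nat \<Rightarrow> ('o,'a) traj list list \<Rightarrow> nat \<Rightarrow> real" where
  "iteration_sum f sel Qs H D t =
     (\<Sum>h\<in>{1..H}. f (nu_policy Qs h (sel (take (t - 1) D))) (D ! (t - 1) ! (h - 1)))"

lemma iteration_sum_take: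
  "1 \<le> t \<Longrightarrow> t \<le> m \<Longrightarrow> iteration_sum f sel Qs H (take m D) t = iteration_sum f sel Qs H D t"
  by (simp add: iteration_sum_def min_def)

lemma sum_iteration_sum_snoc:
  assumes "length D = n"
  shows "(\<Sum>t\<in>{1..Suc n}. iteration_sum f sel Qs H (D @ [x]) t)
    = (\<Sum>t\<in>{1..n}. iteration_sum f sel Qs H D t) + (\<Sum>i<H. f (nu_policy Qs (Suc i) (sel D)) (x ! i))"
proof -
  have "(\<Sum>t\<in>{1..n}. iteration_sum f sel Qs H (D @ [x]) t) = (\<Sum>t\<in>{1..n}. iteration_sum f sel Qs H D t)"
    using iteration_sum_take[of _ n f sel Qs H "D @ [x]"] assms by simp
  moreover have "iteration_sum f sel Qs H (D @ [x]) (Suc n) = (\<Sum>i<H. f (nu_policy Qs (Suc i) (sel D)) (x ! i))"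
    using assms by (simp add: iteration_sum_def sum.atLeast1_atMost_eq[simplified] nth_append)
  ultimately show ?thesis by simp
qed

lemma nn_integral_collect_exp_sum_le:
  assumes bound: "\<And>\<pi>. (\<integral>\<^sup>+\<tau>. ennreal (exp (\<beta> * f \<pi> \<tau>)) \<partial>traj_pmf \<theta> \<pi> H) \<le> ennreal B"
  shows "(\<integral>\<^sup>+D. ennreal (exp (\<beta> * (\<Sum>t\<in>{1..n}. iteration_sum f sel Qs H D t))) \<partial>collect sel \<theta> Qs H n)
          \<le> ennreal B ^ (n * H)"
proof (induction n)
  case (Suc n)
  define S where "S D = (\<Sum>t\<in>{1..n}. iteration_sum f sel Qs H D t)" for D
  define ps where "ps D = map (\<lambda>h. traj_pmf \<theta> (nu_policy Qs h (sel D)) H) [1..<Suc H]" for D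
  define g where "g D i \<tau> = ennreal (exp (\<beta> * f (nu_policy Qs (Suc i) (sel D)) \<tau>))" for D i \<tau>
  have length_ps: "length (ps D) = H" for D by (simp add: ps_def)
  have snoc: "ennreal (exp (\<beta> * (\<Sum>t\<in>{1..Suc n}. iteration_sum f sel Qs H (D @ [x]) t)))
      = ennreal (exp (\<beta> * S D)) * (\<Prod>i<length (ps D). g D i (x ! i))"
    if "length D = n" for D x
    unfolding sum_iteration_sum_snoc[OF that] S_def[symmetric]
    by (simp add: g_def length_ps distrib_left exp_add sum_distrib_left exp_sum prod_ennreal ennreal_mult')
  have inner: "(\<integral>\<^sup>+x. (\<Prod>i<length (ps D). g D i (x ! i)) \<partial>seq_pmf (ps D)) \<le> ennreal B ^ H" for D
    using nn_integral_seq_pmf_prod_le[of "ps D" "g D" "ennreal B"] bound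
    by (simp add: length_ps ps_def g_def nth_upt del: upt_Suc)
  have "(\<integral>\<^sup>+D. ennreal (exp (\<beta> * (\<Sum>t\<in>{1..Suc n}. iteration_sum f sel Qs H D t))) \<partial>collect sel \<theta> Qs H (Suc n))
      = (\<integral>\<^sup>+D. \<integral>\<^sup>+x. ennreal (exp (\<beta> * (\<Sum>t\<in>{1..Suc n}. iteration_sum f sel Qs H (D @ [x]) t)))
            \<partial>seq_pmf (ps D) \<partial>collect sel \<theta> Qs H n)"
    by (simp add: ps_def del: upt_Suc)
  also have "\<dots> = (\<integral>\<^sup>+D. ennreal (exp (\<beta> * S D)) * \<integral>\<^sup>+x. (\<Prod>i<length (ps D). g D i (x ! i))
            \<partial>seq_pmf (ps D) \<partial>collect sel \<theta> Qs H n)"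
  proof (intro nn_integral_cong_AE, unfold AE_measure_pmf_iff, intro ballI)
    fix D assume "D \<in> set_pmf (collect sel \<theta> Qs H n)"
    then show "(\<integral>\<^sup>+x. ennreal (exp (\<beta> * (\<Sum>t\<in>{1..Suc n}. iteration_sum f sel Qs H (D @ [x]) t)))
            \<partial>seq_pmf (ps D))
        = ennreal (exp (\<beta> * S D)) * (\<integral>\<^sup>+x. (\<Prod>i<length (ps D). g D i (x ! i)) \<partial>seq_pmf (ps D))"
      by (simp only: snoc length_of_set_pmf_collect) (simp add: nn_integral_cmult)
  qed
  also have "\<dots> \<le> (\<integral>\<^sup>+D. ennreal (exp (\<beta> * S D)) * ennreal B ^ H \<partial>collect sel \<theta> Qs H n)"
    by (intro nn_integral_mono mult_left_mono inner) simp
  also have "\<dots> = (\<integral>\<^sup>+D. ennreal (exp (\<beta> * S D)) \<partial>collect sel \<theta> Qs H n) * ennreal B ^ H"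
    by (simp add: nn_integral_multc)
  also have "\<dots> \<le> ennreal B ^ (n * H) * ennreal B ^ H"
    using Suc.IH by (simp add: S_def mult_right_mono)
  finally show ?case by (simp add: power_add mult.commute)
qed simp

definition log_lik_ratio :: "('o,'a) model \<Rightarrow> ('o,'a) model \<Rightarrow> nat \<Rightarrow> ('o,'a) policy \<Rightarrow> ('o,'a) traj \<Rightarrow> real" where
  "log_lik_ratio \<theta> \<theta>' H \<pi> \<tau> = ln (pmf (traj_pmf \<theta> \<pi> H) \<tau> / pmf (traj_pmf \<theta>' \<pi> H) \<tau>)"

lemma collect_log_lik_ratio_tail:
  fixes \<theta> \<theta>' :: "('o::finite, 'a::finite) model"
  assumes "1 < \<alpha>" and div: "\<And>\<pi>. renyi_div \<alpha> (traj_pmf \<theta> \<pi> H) (traj_pmf \<theta>' \<pi> H) \<le> ereal e"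
    and "k \<le> K"
  shows "measure_pmf.prob (collect sel \<theta> Qs H K)
           {D. c \<le> (\<Sum>t\<in>{1..k}. iteration_sum (log_lik_ratio \<theta> \<theta>' H) sel Qs H D t)}
         \<le> exp ((\<alpha> - 1) * (e * real (k * H) - c))"
proof -
  define S where "S D = (\<Sum>t\<in>{1..k}. iteration_sum (log_lik_ratio \<theta> \<theta>' H) sel Qs H D t)" for D
  have bound: "(\<integral>\<^sup>+\<tau>. ennreal (exp ((\<alpha> - 1) * log_lik_ratio \<theta> \<theta>' H \<pi> \<tau>)) \<partial>traj_pmf \<theta> \<pi> H)
      \<le> ennreal (exp ((\<alpha> - 1) * e))" for \<pi>
    unfolding log_lik_ratio_def
    using renyi_moment_le_exp_if_renyi_div_le[OF \<open>1 < \<alpha>\<close> finite_set_pmf_traj_pmf div]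
    by (simp add: nn_integral_exp_ln_ratio_eq_renyi_moment[OF finite_set_pmf_traj_pmf set_pmf_subset_if_renyi_div_le[OF div]])
  have "S (take k D) = S D" for D
    unfolding S_def by (intro sum.cong refl iteration_sum_take) auto
  then have "measure_pmf.prob (collect sel \<theta> Qs H K) {D. c \<le> S D}
      = measure_pmf.prob (map_pmf (take k) (collect sel \<theta> Qs H K)) {D. c \<le> S D}"
    by (simp add: measure_map_pmf vimage_def)
  also have "\<dots> = measure_pmf.prob (collect sel \<theta> Qs H k) {D. c \<le> S D}"
    by (simp add: map_pmf_take_collect[OF \<open>k \<le> K\<close>])
  also have "\<dots> \<le> exp (- (\<alpha> - 1) * c) * exp ((\<alpha> - 1) * e) ^ (k * H)"
    using \<open>1 < \<alpha>\<close> nn_integral_collect_exp_sum_le[OF bound, where n = k and sel = sel and Qs = Qs]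
    by (intro measure_pmf_ge_le_exp_moment) (auto simp: S_def ennreal_power)
  also have "\<dots> = exp ((\<alpha> - 1) * (e * real (k * H) - c))"
    by (simp add: exp_add [symmetric] exp_of_nat_mult [symmetric] algebra_simps)
  finally show ?thesis by (simp add: S_def)
qed

lemma collect_log_lik_ratio_bound:
  fixes \<theta> \<theta>' :: "('o::finite, 'a::finite) model"
  assumes "1 < \<alpha>" "0 < \<delta>" "0 \<le> e"
    and div: "\<And>\<pi>. renyi_div \<alpha> (traj_pmf \<theta> \<pi> H) (traj_pmf \<theta>' \<pi> H) \<le> ereal e"
  shows "1 - \<delta> \<le> measure_pmf.prob (collect sel \<theta> Qs H K)
           {D. \<forall>k\<in>{1..K}. (\<Sum>t\<in>{1..<k}. iteration_sum (log_lik_ratio \<theta> \<theta>' H) sel Qs H D t)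
                      \<le> e * (real K * real H) + 1 / (\<alpha> - 1) * ln (real K / \<delta>)}"
proof -
  define c where "c = e * (real K * real H) + 1 / (\<alpha> - 1) * ln (real K / \<delta>)"
  define S where "S k D = (\<Sum>t\<in>{1..<k}. iteration_sum (log_lik_ratio \<theta> \<theta>' H) sel Qs H D t)" for k D
  define M where "M = collect sel \<theta> Qs H K"
  have tail: "measure_pmf.prob M {D. c \<le> S k D} \<le> \<delta> / K" if "k \<in> {1..K}" for k
  proof -
    have "{1..<k} = {1..k - 1}" "k - 1 \<le> K" using that by auto
    have "(\<alpha> - 1) * (e * real ((k - 1) * H)) \<le> (\<alpha> - 1) * (e * (real K * real H))"
      using \<open>1 < \<alpha>\<close> \<open>0 \<le> e\<close> \<open>k - 1 \<le> K\<close>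
      by (intro mult_left_mono) (simp_all add: mult_right_mono)
    moreover have "(\<alpha> - 1) * c = (\<alpha> - 1) * (e * (real K * real H)) + ln (real K / \<delta>)"
      using \<open>1 < \<alpha>\<close> by (simp add: c_def field_simps)
    ultimately have "(\<alpha> - 1) * (e * real ((k - 1) * H) - c) \<le> - ln (real K / \<delta>)"
      by (simp add: right_diff_distrib)
    then have "exp ((\<alpha> - 1) * (e * real ((k - 1) * H) - c)) \<le> exp (- ln (real K / \<delta>))"
      by simp
    also have "\<dots> = \<delta> / K"
      using \<open>0 < \<delta>\<close> that by (simp add: exp_minus)
    finally have "exp ((\<alpha> - 1) * (e * real ((k - 1) * H) - c)) \<le> \<delta> / K" .
    moreover have "measure_pmf.prob M {D. c \<le> S k D} \<le> exp ((\<alpha> - 1) * (e * real ((k - 1) * H) - c))"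
      unfolding M_def S_def \<open>{1..<k} = {1..k - 1}\<close>
      by (rule collect_log_lik_ratio_tail[OF \<open>1 < \<alpha>\<close> div \<open>k - 1 \<le> K\<close>])
    ultimately show ?thesis by linarith
  qed
  have "measure_pmf.prob M (\<Union>k\<in>{1..K}. {D. c \<le> S k D})
      \<le> (\<Sum>k\<in>{1..K}. measure_pmf.prob M {D. c \<le> S k D})"
    by (rule measure_pmf.finite_measure_subadditive_finite) auto
  also have "\<dots> \<le> (\<Sum>k\<in>{1..K}. \<delta> / K)" by (intro sum_mono tail)
  also have "\<dots> \<le> \<delta>" using \<open>0 < \<delta>\<close> by simp
  finally have "measure_pmf.prob M (UNIV - {D. \<forall>k\<in>{1..K}. S k D \<le> c}) \<le> \<delta>"
    by (rule order_trans[rotated], intro measure_pmf.finite_measure_mono) auto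
  then have "1 - \<delta> \<le> measure_pmf.prob M {D. \<forall>k\<in>{1..K}. S k D \<le> c}"
    using measure_pmf.prob_compl[of "{D. \<forall>k\<in>{1..K}. S k D \<le> c}" M] by simp
  then show ?thesis by (simp add: M_def S_def c_def)
qed

lemma iteration_sum_log_lik_ratio_eq_0:
  fixes \<theta> \<theta>' :: "('o::finite, 'a::finite) model"
  assumes "1 < \<alpha>" and div: "\<And>\<pi>. renyi_div \<alpha> (traj_pmf \<theta> \<pi> H) (traj_pmf \<theta>' \<pi> H) \<le> 0"
    and D: "D \<in> set_pmf (collect sel \<theta> Qs H K)" and "t \<in> {1..K}"
  shows "iteration_sum (log_lik_ratio \<theta> \<theta>' H) sel Qs H D t = 0"
proof -
  have ratio_0: "log_lik_ratio \<theta> \<theta>' H \<pi> \<tau> = 0" if \<tau>: "\<tau> \<in> set_pmf (traj_pmf \<theta> \<pi> H)" for \<pi> \<tau>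
  proof -
    have div0: "renyi_div \<alpha> (traj_pmf \<theta> \<pi> H) (traj_pmf \<theta>' \<pi> H) \<le> ereal 0"
      using div by (simp add: zero_ereal_def)
    have "pmf (traj_pmf \<theta> \<pi> H) \<tau> = pmf (traj_pmf \<theta>' \<pi> H) \<tau>"
      using \<open>1 < \<alpha>\<close> renyi_moment_le_exp_if_renyi_div_le[OF \<open>1 < \<alpha>\<close> finite_set_pmf_traj_pmf div0]
      by (intro pmf_eq_if_renyi_moment_le_one[OF _ finite_set_pmf_traj_pmf
            set_pmf_subset_if_renyi_div_le[OF div0] _ \<tau>]) auto
    with pmf_positive[OF \<tau>] show ?thesis by (simp add: log_lik_ratio_def)
  qed
  show ?thesis
    unfolding iteration_sum_def
  proof (intro sum.neutral ballI ratio_0)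
    fix h assume "h \<in> {1..H}"
    with set_pmf_collect_nth[OF D, of "t - 1" "h - 1"] \<open>t \<in> {1..K}\<close>
    show "D ! (t - 1) ! (h - 1) \<in> set_pmf (traj_pmf \<theta> (nu_policy Qs h (sel (take (t - 1) D))) H)"
      by auto
  qed
qed


lemma collect_log_lik_ratio_sums_eq_0:
  fixes \<theta> \<theta>' :: "('o::finite, 'a::finite) model"
  assumes "1 < \<alpha>" and "\<And>\<pi>. renyi_div \<alpha> (traj_pmf \<theta> \<pi> H) (traj_pmf \<theta>' \<pi> H) \<le> 0"
    and "D \<in> set_pmf (collect sel \<theta> Qs H K)" and "k \<le> Suc K"
  shows "(\<Sum>t\<in>{1..<k}. iteration_sum (log_lik_ratio \<theta> \<theta>' H) sel Qs H D t) = 0"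
  using assms iteration_sum_log_lik_ratio_eq_0[OF assms(1-3)] by (intro sum.neutral) auto

theorem lemma4:
  fixes \<alpha> \<delta> :: real and K H :: nat
    and \<Theta> \<Theta>u :: "('o::finite, 'a::finite) model set"
    and \<theta>star \<theta>eps :: "('o, 'a) model"
    and Qs :: "nat \<Rightarrow> 'a list set"
    and sel :: "('o, 'a) traj list list \<Rightarrow> ('o, 'a) policy"
    and \<epsilon>0 :: ereal
  assumes alpha: "\<alpha> > 1"
    and delta: "0 < \<delta>" "\<delta> < 1"
    and target: "\<theta>star \<in> \<Theta>"
    and cls: "\<Theta>u \<subseteq> \<Theta>"
    and core: "\<And>h. h \<in> {1..H} \<Longrightarrow> finite (Qs h) \<and> Qs h \<noteq> {} \<and> (\<forall>q\<in>Qs h. length q = H - h)"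
    and eps_mem: "\<theta>eps \<in> \<Theta>u"
    and eps_min: "\<And>\<theta>0. \<theta>0 \<in> \<Theta>u \<Longrightarrow>
        (SUP \<pi>. renyi_div \<alpha> (traj_pmf \<theta>star \<pi> H) (traj_pmf \<theta>eps \<pi> H))
          \<le> (SUP \<pi>. renyi_div \<alpha> (traj_pmf \<theta>star \<pi> H) (traj_pmf \<theta>0 \<pi> H))"
    and eps_def: "\<epsilon>0 = (SUP \<pi>. renyi_div \<alpha> (traj_pmf \<theta>star \<pi> H) (traj_pmf \<theta>eps \<pi> H))"
  shows "measure_pmf.prob (collect sel \<theta>star Qs H K)
     {D. \<forall>k\<in>{1..K}.
        ereal (\<Sum>t\<in>{1..<k}. \<Sum>h\<in>{1..H}.
            ln (pmf (traj_pmf \<theta>star (nu_policy Qs h (sel (take (t - 1) D))) H) (D ! (t - 1) ! (h - 1))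
              / pmf (traj_pmf \<theta>eps (nu_policy Qs h (sel (take (t - 1) D))) H) (D ! (t - 1) ! (h - 1))))
        \<le> \<epsilon>0 * ereal (real K * real H)
           + (if \<epsilon>0 \<noteq> 0 then ereal (1 / (\<alpha> - 1) * ln (real K / \<delta>)) else 0)}
     \<ge> 1 - \<delta>"
proof -
  define R where "R = \<epsilon>0 * ereal (real K * real H)
    + (if \<epsilon>0 \<noteq> 0 then ereal (1 / (\<alpha> - 1) * ln (real K / \<delta>)) else 0)"
  define S where "S k D = (\<Sum>t\<in>{1..<k}. iteration_sum (log_lik_ratio \<theta>star \<theta>eps H) sel Qs H D t)" for k D
  define A where "A = {D. \<forall>k\<in>{1..K}. ereal (S k D) \<le> R}"
  define M where "M = collect sel \<theta>star Qs H K"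
  have div: "renyi_div \<alpha> (traj_pmf \<theta>star \<pi> H) (traj_pmf \<theta>eps \<pi> H) \<le> \<epsilon>0" for \<pi>
    unfolding eps_def by (rule SUP_upper) simp
  have "0 \<le> \<epsilon>0" using renyi_div_nonneg[OF alpha] div by (rule order_trans)
  then consider "\<epsilon>0 = 0" | "\<epsilon>0 = \<infinity>" | e where "\<epsilon>0 = ereal e" "0 < e"
    by (cases \<epsilon>0) force+
  then have "1 - \<delta> \<le> measure_pmf.prob M A"
  proof cases
    case 1
    then have "measure_pmf.prob M A = 1"
      using collect_log_lik_ratio_sums_eq_0[OF alpha div[unfolded 1]]
      by (simp add: measure_pmf.prob_eq_1 AE_measure_pmf_iff A_def R_def S_def M_def)
    then show ?thesis using delta by simp
  next
    case 2
    have "ereal (S k D) \<le> R" if "k \<in> {1..K}" for k D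
      using that alpha delta by (cases "H = 0") (simp_all add: S_def R_def iteration_sum_def 2)
    then show ?thesis using delta by (simp add: A_def)
  next
    case (3 e)
    then show ?thesis
      using collect_log_lik_ratio_bound[OF alpha delta(1) _ div[unfolded 3(1)], of sel Qs K]
      by (simp add: M_def A_def S_def R_def)
  qed
  then show ?thesis by (simp add: M_def A_def S_def R_def iteration_sum_def log_lik_ratio_def)
qed

end
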